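(* Let $\alpha\in(0,1)$, $p\in(0,1]$, $m=\lfloor\alpha n\rfloor$, let $B$ be an $n\times(n-m)$ matrix with i.i.d. $\mathcal N(0,1)$ entries, and let $\lambda>0$ be a constant. There exist constants $\rho^*>0$ and $c_{10}>0$ (depending on $\alpha,p,\lambda$) such that for all sufficiently large $n$, with probability at least $1-e^{-c_{10}n}$, for every $\mathbf z\in\mathcal S$ and every $T\subseteq\{1,\dots,n\}$ with $|T|\le\rho^*n$, $\|B_T\mathbf z\|_p^p<\tfrac12\lambda n$.
   Context: $\mathcal S$ is the unit Euclidean sphere in $\mathbb R^{n-m}$; $B_T$ is the submatrix of rows of $B$ indexed by $T$; $\|\mathbf v\|_p^p=\sum_i|v_i|^p$. *)

theory Defs
  imports "HOL-Probability.Probability"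
begin

(* Law of an n x k matrix with i.i.d. N(0,1) entries; entries B(i,j), i<n, j<k
   (0-based indices). *)
definition gauss_matrix :: "nat \<Rightarrow> nat \<Rightarrow> (nat \<times> nat \<Rightarrow> real) measure" where
  "gauss_matrix n k = PiM ({..<n} \<times> {..<k}) (\<lambda>_. density lborel std_normal_density)"

end

theory Submission
  imports Defs
begin

(* Probabilistic half: the operator norm of B is at most 170 sqrt n with probability at least
   1 - exp(-n).  For fixed vectors u, z the bilinear form u^T B z is Gaussian, so a Chernoff
   bound (from the moment generating function of the product measure) controls it; a union
   bound over an explicit net of the Euclidean ball of size exp(38 d) handles all pairs of net
   points, and the standard net argument passes from the net to the whole ball.

   Deterministic half: if ||Bz||_2^2 <= C n for a unit vector z, then |y|^p <= eta + y^2/eta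
   gives  sum_{i in T} |(Bz)_i|^p <= |T| eta + C n / eta,  which is < lam n / 2 once
   |T| <= rho n for a suitable rho depending only on lam.

   Since the measure of a non-measurable set is 0, we also prove that the good event is
   measurable: a strict bound on the compact unit sphere has a uniform gap, and by homogeneity
   and continuity it suffices to test rational vectors. *)

section \<open>Euclidean norms and bilinear forms on finitely supported coordinates\<close>

definition sqnorm :: "nat \<Rightarrow> (nat \<Rightarrow> real) \<Rightarrow> real" where
  "sqnorm k z = (\<Sum>j<k. (z j)^2)"

definition bilin :: "nat \<Rightarrow> nat \<Rightarrow> (nat \<times> nat \<Rightarrow> real) \<Rightarrow> (nat \<Rightarrow> real) \<Rightarrow> (nat \<Rightarrow> real) \<Rightarrow> real" where
  "bilin n k B u z = (\<Sum>i<n. \<Sum>j<k. u i * B(i,j) * z j)"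

lemma sqnorm_nonneg: "0 \<le> sqnorm k z"
  unfolding sqnorm_def by (simp add: sum_nonneg)

lemma sqnorm_coord: "j < k \<Longrightarrow> (z j)^2 \<le> sqnorm k z"
  unfolding sqnorm_def by (intro member_le_sum) auto

lemma abs_coord_le_1: "j < k \<Longrightarrow> sqnorm k z \<le> 1 \<Longrightarrow> \<bar>z j\<bar> \<le> 1"
  using sqnorm_coord[of j k z] abs_le_square_iff[of "z j" 1] by simp

lemma sqnorm_scale: "sqnorm k (\<lambda>j. c * z j) = c^2 * sqnorm k z"
  unfolding sqnorm_def by (simp add: sum_distrib_left power_mult_distrib)

lemma bilin_scale: "bilin n k B (\<lambda>i. a * u i) (\<lambda>j. b * z j) = a * b * bilin n k B u z"
  unfolding bilin_def by (simp add: sum_distrib_left algebra_simps)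

lemma bilin_split:
  "bilin n k B u z = bilin n k B u' z' + bilin n k B (\<lambda>i. u i - u' i) z + bilin n k B u' (\<lambda>j. z j - z' j)"
  unfolding bilin_def by (simp add: sum.distrib[symmetric] algebra_simps)

lemma bilin_as_entry_sum: "bilin n k B u z = (\<Sum>ij\<in>{..<n}\<times>{..<k}. (u (fst ij) * z (snd ij)) * B ij)"
  unfolding bilin_def sum.cartesian_product by (intro sum.cong) (auto simp: split_beta)

lemma entry_coeffs_sqnorm:
  "(\<Sum>ij\<in>{..<n}\<times>{..<k}. (t * (u (fst ij) * z (snd ij)))^2) = t^2 * sqnorm n u * sqnorm k z"
proof -
  have "(\<Sum>ij\<in>{..<n}\<times>{..<k}. (t * (u (fst ij) * z (snd ij)))^2) = (\<Sum>i<n. \<Sum>j<k. t^2 * (u i)^2 * (z j)^2)"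
    unfolding sum.cartesian_product by (intro sum.cong refl) (auto simp: power_mult_distrib)
  also have "\<dots> = t^2 * sqnorm n u * sqnorm k z"
    unfolding sqnorm_def mult.assoc sum_product by (simp add: sum_distrib_left)
  finally show ?thesis .
qed

section \<open>Gaussian matrices: moment generating function and a Chernoff bound\<close>

lemma std_normal_mgf:
  "(\<integral>\<^sup>+ x. ennreal (exp (c * x)) \<partial>density lborel std_normal_density) = ennreal (exp (c^2/2))"
proof -
  have shift: "std_normal_density x * exp (c * x) = exp (c^2/2) * normal_density c 1 x" for x
  proof -
    have "exp (- x\<^sup>2 / 2) * exp (c * x) = exp (c^2/2) * exp (-(x - c)\<^sup>2 / 2)"
      by (simp add: mult_exp_exp power2_eq_square algebra_simps add_divide_distrib diff_divide_distrib)
    then show ?thesis unfolding std_normal_density_def normal_density_def by simp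
  qed
  have total: "(\<integral>\<^sup>+ x. ennreal (normal_density c 1 x) \<partial>lborel) = 1"
    using integral_normal_density[of 1 c] integrable_normal_density[of 1 c]
    by (subst nn_integral_eq_integral) auto
  have "(\<integral>\<^sup>+ x. ennreal (exp (c * x)) \<partial>density lborel std_normal_density)
      = (\<integral>\<^sup>+ x. ennreal (std_normal_density x) * ennreal (exp (c * x)) \<partial>lborel)"
    by (subst nn_integral_density) auto
  also have "\<dots> = (\<integral>\<^sup>+ x. ennreal (exp (c^2/2)) * ennreal (normal_density c 1 x) \<partial>lborel)"
    by (intro nn_integral_cong) (simp add: shift flip: ennreal_mult)
  also have "\<dots> = ennreal (exp (c^2/2)) * (\<integral>\<^sup>+ x. ennreal (normal_density c 1 x) \<partial>lborel)"
    by (rule nn_integral_cmult) auto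
  finally show ?thesis using total by simp
qed

lemma prob_space_std_normal: "prob_space (density lborel std_normal_density)"
  by (rule prob_space_normal_density) simp

lemma prob_space_gauss_matrix: "prob_space (gauss_matrix n k)"
  unfolding gauss_matrix_def by (intro prob_space_PiM prob_space_std_normal)

lemma gauss_matrix_entry_measurable:
  assumes "i < n" "j < k"
  shows "(\<lambda>B. B (i,j)) \<in> borel_measurable (gauss_matrix n k)"
proof -
  have "(\<lambda>B. B (i,j)) \<in> measurable (gauss_matrix n k) (density lborel std_normal_density)"
    unfolding gauss_matrix_def by (rule measurable_component_singleton) (use assms in auto)
  then show ?thesis by (simp cong: measurable_cong_sets)
qed

lemma gauss_matrix_mgf:
  fixes a :: "nat \<times> nat \<Rightarrow> real"
  shows "(\<integral>\<^sup>+ B. ennreal (exp (\<Sum>ij\<in>{..<n}\<times>{..<k}. a ij * B ij)) \<partial>gauss_matrix n k)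
     = ennreal (exp ((\<Sum>ij\<in>{..<n}\<times>{..<k}. (a ij)^2)/2))"
proof -
  let ?N = "density lborel std_normal_density"
  let ?I = "{..<n}\<times>{..<k}"
  interpret product_prob_space "\<lambda>_. ?N" ?I
    by (simp add: product_prob_space_def product_prob_space_axioms_def product_sigma_finite_def
        prob_space_std_normal prob_space_imp_sigma_finite)
  have "(\<integral>\<^sup>+ B. ennreal (exp (\<Sum>ij\<in>?I. a ij * B ij)) \<partial>gauss_matrix n k)
     = (\<integral>\<^sup>+ B. (\<Prod>ij\<in>?I. ennreal (exp (a ij * B ij))) \<partial>PiM ?I (\<lambda>_. ?N))"
    unfolding gauss_matrix_def by (intro nn_integral_cong) (simp add: exp_sum prod_ennreal)
  also have "\<dots> = (\<Prod>ij\<in>?I. (\<integral>\<^sup>+ x. ennreal (exp (a ij * x)) \<partial>?N))"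
    by (rule product_nn_integral_prod) auto
  also have "\<dots> = ennreal (exp ((\<Sum>ij\<in>?I. (a ij)^2)/2))"
    by (simp add: std_normal_mgf prod_ennreal exp_sum sum_divide_distrib)
  finally show ?thesis .
qed

lemma bilin_measurable: "(\<lambda>B. bilin n k B u z) \<in> borel_measurable (gauss_matrix n k)"
  unfolding bilin_def
  by (intro borel_measurable_sum borel_measurable_times gauss_matrix_entry_measurable
      borel_measurable_const) auto

(* Chernoff bound: u^T B z is N(0, |u|^2 |z|^2), so P(u^T B z >= K) <= exp(t^2|u|^2|z|^2/2 - tK). *)
lemma bilin_chernoff:
  assumes t: "t > 0"
  shows "measure (gauss_matrix n k) {B \<in> space (gauss_matrix n k). K \<le> bilin n k B u z}
      \<le> exp (t^2 * sqnorm n u * sqnorm k z / 2 - t * K)"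
proof -
  let ?M = "gauss_matrix n k"
  let ?I = "{..<n}\<times>{..<k}"
  interpret prob_space ?M by (rule prob_space_gauss_matrix)
  define a where "a = (\<lambda>ij::nat\<times>nat. t * (u (fst ij) * z (snd ij)))"
  define X where "X = (\<lambda>B. ennreal (exp (- t * K)) * ennreal (exp (\<Sum>ij\<in>?I. a ij * B ij)))"
  have X_eq: "X B = ennreal (exp (t * bilin n k B u z - t * K))" for B
    unfolding X_def a_def bilin_as_entry_sum
    by (simp add: sum_distrib_left mult.assoc ennreal_mult[symmetric] exp_add[symmetric])
  have event_eq: "{B \<in> space ?M. K \<le> bilin n k B u z} = {B \<in> space ?M. 1 \<le> X B}"
    using t by (auto simp: X_eq one_le_exp_iff)
  have [measurable]: "(\<lambda>B. B ij) \<in> borel_measurable ?M" if "ij \<in> ?I" for ij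
    using that gauss_matrix_entry_measurable[of "fst ij" n "snd ij" k] by auto
  have "emeasure ?M {B \<in> space ?M. 1 \<le> X B}
      \<le> ennreal (exp (- t * K)) * (\<integral>\<^sup>+ B. ennreal (exp (\<Sum>ij\<in>?I. a ij * B ij)) * indicator (space ?M) B \<partial>?M)"
    unfolding X_def by (rule nn_integral_Markov_inequality) simp_all
  also have "(\<integral>\<^sup>+ B. ennreal (exp (\<Sum>ij\<in>?I. a ij * B ij)) * indicator (space ?M) B \<partial>?M)
      = ennreal (exp (t^2 * sqnorm n u * sqnorm k z / 2))"
    by (subst nn_integral_cong[where v = "\<lambda>B. ennreal (exp (\<Sum>ij\<in>?I. a ij * B ij))"])
       (auto simp: gauss_matrix_mgf a_def entry_coeffs_sqnorm)
  finally show ?thesis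
    by (simp add: event_eq emeasure_eq_measure ennreal_mult[symmetric]
        exp_add[symmetric])
qed

section \<open>An explicit net of the Euclidean unit ball\<close>

definition net_index :: "nat \<Rightarrow> (nat \<Rightarrow> int) set" where
  "net_index d = {x \<in> PiE {..<d} (\<lambda>_. {-int (36*d)..int (36*d)}). (\<Sum>j<d. (real_of_int (x j))^2) \<le> 36 * real d}"

(* The lattice (1 / (3 sqrt d)) Z^d intersected with the ball of radius 2. *)
definition net :: "nat \<Rightarrow> (nat \<Rightarrow> real) set" where
  "net d = (\<lambda>x j. if j < d then real_of_int (x j) / (3 * sqrt d) else 0) ` net_index d"

lemma finite_net_index: "finite (net_index d)"
  by (rule finite_subset[of _ "PiE {..<d} (\<lambda>_. {-int (36*d)..int (36*d)})"])
     (auto simp: net_index_def intro: finite_PiE)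

lemma finite_net: "finite (net d)"
  unfolding net_def using finite_net_index by simp

lemma int_abs_le_square: "\<bar>a::int\<bar> \<le> a^2"
proof (cases "a = 0")
  case False
  then have "\<bar>a\<bar> * 1 \<le> \<bar>a\<bar> * \<bar>a\<bar>" by (intro mult_left_mono) auto
  then show ?thesis by (simp add: power2_eq_square)
qed simp

lemma symmetric_half_power_sum: "(\<Sum>a\<in>{-int M..int M}. (1/2::real)^(nat \<bar>a\<bar>)) \<le> 3 - 2*(1/2)^M"
proof (induction M)
  case 0 then show ?case by simp
next
  case (Suc M)
  have split: "{-int (Suc M)..int (Suc M)} = insert (int (Suc M)) (insert (- int (Suc M)) {-int M..int M})"
    by auto
  have "(\<Sum>a\<in>{-int (Suc M)..int (Suc M)}. (1/2::real)^(nat \<bar>a\<bar>))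
      = 2 * (1/2)^(Suc M) + (\<Sum>a\<in>{-int M..int M}. (1/2::real)^(nat \<bar>a\<bar>))"
    unfolding split by (simp add: nat_add_distrib)
  with Suc show ?case by simp
qed

lemma exp_neg_square_le_half_power: "exp (- ((real_of_int a)\<^sup>2)) \<le> (1/2::real)^(nat \<bar>a\<bar>)"
proof -
  have "\<bar>real_of_int a\<bar> \<le> (real_of_int a)^2"
    using int_abs_le_square[of a] by (metis of_int_abs of_int_le_iff of_int_power)
  then have "exp (- ((real_of_int a)\<^sup>2)) \<le> exp (real (nat \<bar>a\<bar>) * (-1))" by simp
  also have "\<dots> = exp (-1) ^ (nat \<bar>a\<bar>)" by (rule exp_of_nat_mult)
  also have "\<dots> \<le> (1/2) ^ (nat \<bar>a\<bar>)"
  proof (rule power_mono)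
    have "2 \<le> exp (1::real)" using exp_ge_add_one_self[of 1] by simp
    then show "exp (-1) \<le> (1/2::real)" by (simp add: exp_minus field_simps)
  qed simp
  finally show ?thesis .
qed

(* Counting with the weight exp(36 d - |x|^2) >= 1 on the index set factorizes over coordinates. *)
lemma card_net_index: "real (card (net_index d)) \<le> exp (36 * real d) * 4 ^ d"
proof -
  define P where "P = PiE {..<d} (\<lambda>_. {-int (36*d)..int (36*d)})"
  have finite_P: "finite P" unfolding P_def by (intro finite_PiE) auto
  define w where "w = (\<lambda>x::nat\<Rightarrow>int. exp (36 * real d - (\<Sum>j<d. (real_of_int (x j))^2)))"
  have one_dim: "(\<Sum>a\<in>{-int (36*d)..int (36*d)}. exp (- ((real_of_int a)\<^sup>2))) \<le> 4"
  proof -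
    have "(\<Sum>a\<in>{-int (36*d)..int (36*d)}. exp (- ((real_of_int a)\<^sup>2)))
       \<le> (\<Sum>a\<in>{-int (36*d)..int (36*d)}. (1/2::real)^(nat \<bar>a\<bar>))"
      by (intro sum_mono exp_neg_square_le_half_power)
    also have "\<dots> \<le> 3 - 2*(1/2)^(36*d)" by (rule symmetric_half_power_sum)
    finally show ?thesis using zero_le_power[of "1/2::real" "36*d"] by linarith
  qed
  have "real (card (net_index d)) = (\<Sum>x\<in>net_index d. 1)" by simp
  also have "\<dots> \<le> (\<Sum>x\<in>net_index d. w x)"
    by (intro sum_mono) (auto simp: w_def net_index_def)
  also have "\<dots> \<le> (\<Sum>x\<in>P. w x)"
    using finite_P by (intro sum_mono2) (auto simp: w_def P_def net_index_def)
  also have "\<dots> = exp (36 * real d) * (\<Sum>x\<in>P. \<Prod>j<d. exp (- ((real_of_int (x j))\<^sup>2)))"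
    unfolding w_def
    by (simp add: sum_distrib_left exp_diff exp_sum[symmetric] sum_negf divide_inverse exp_minus[symmetric])
  also have "(\<Sum>x\<in>P. \<Prod>j<d. exp (- ((real_of_int (x j))\<^sup>2)))
      = (\<Prod>j<d. \<Sum>a\<in>{-int (36*d)..int (36*d)}. exp (- ((real_of_int a)\<^sup>2)))"
    unfolding P_def by (rule prod_sum_PiE[symmetric]) auto
  also have "\<dots> \<le> (\<Prod>j<d. (4::real))"
    using one_dim by (intro prod_mono) (auto intro: sum_nonneg)
  finally show ?thesis by simp
qed

lemma card_net: "real (card (net d)) \<le> exp (38 * real d)"
proof -
  have "2 * 2 \<le> exp 1 * exp (1::real)"
    using exp_ge_add_one_self[of 1] by (intro mult_mono) auto
  then have four: "(4::real) \<le> exp 2" by (simp add: mult_exp_exp)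
  have "real (card (net d)) \<le> real (card (net_index d))"
    unfolding net_def by (simp add: card_image_le finite_net_index)
  also have "\<dots> \<le> exp (36 * real d) * 4 ^ d" by (rule card_net_index)
  also have "\<dots> \<le> exp (36 * real d) * exp 2 ^ d"
    using four by (intro mult_left_mono power_mono) auto
  also have "exp (36 * real d) * exp 2 ^ d = exp (38 * real d)"
    by (simp add: exp_of_nat_mult[symmetric] exp_add[symmetric] algebra_simps)
  finally show ?thesis .
qed

lemma net_sqnorm_le: assumes "1 \<le> d" "w \<in> net d" shows "sqnorm d w \<le> 4"
proof -
  obtain x where x: "x \<in> net_index d" and w: "w = (\<lambda>j. if j < d then real_of_int (x j) / (3 * sqrt d) else 0)"
    using assms(2) unfolding net_def by auto
  have d: "real d > 0" using assms(1) by simp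
  have "sqnorm d w = (\<Sum>j<d. (real_of_int (x j))^2) / (9 * real d)"
    unfolding sqnorm_def w sum_divide_distrib
    by (intro sum.cong) (use d in \<open>auto simp: power_divide power_mult_distrib\<close>)
  also have "\<dots> \<le> (36 * real d) / (9 * real d)"
    using x d unfolding net_index_def by (intro divide_right_mono) auto
  finally show ?thesis using d by simp
qed

(* Every vector of the unit ball is within distance 1/6 of the net: round each coordinate of
   3 sqrt d * z to the nearest integer. *)
lemma net_approx:
  assumes d1: "1 \<le> d" and z: "sqnorm d z \<le> 1"
  shows "\<exists>w\<in>net d. sqnorm d (\<lambda>j. z j - w j) \<le> 1/36"
proof -
  define h where "h = 3 * sqrt (real d)"
  have d: "real d > 0" using d1 by simp
  have h: "h > 0" unfolding h_def using d by simp
  have h2: "h^2 = 9 * real d" unfolding h_def using d by (simp add: power_mult_distrib)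
  define x where "x = restrict (\<lambda>j. round (h * z j)) {..<d}"
  define w where "w = (\<lambda>j. if j < d then real_of_int (x j) / (3 * sqrt d) else 0)"
  have wj: "w j = real_of_int (round (h * z j)) / h" if "j < d" for j
    using that unfolding w_def x_def h_def by simp
  have coord_err: "(z j - w j)^2 \<le> 1 / (36 * real d)" if "j < d" for j
  proof -
    have "(z j - w j) * h = h * z j - real_of_int (round (h * z j))"
      using h wj[OF that] by (simp add: field_simps)
    then have "\<bar>(z j - w j) * h\<bar> \<le> 1/2"
      using of_int_round_abs_le[of "h * z j"] by (metis abs_minus_commute)
    then have "\<bar>z j - w j\<bar> * h \<le> 1/2" using h by (simp add: abs_mult)
    then have "\<bar>z j - w j\<bar> \<le> 1 / (2*h)" using h by (simp add: field_simps)
    then have "\<bar>z j - w j\<bar>^2 \<le> (1/(2*h))^2" by (intro power_mono) auto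
    then show ?thesis using h2 by (simp add: power_divide power_mult_distrib)
  qed
  have err: "sqnorm d (\<lambda>j. z j - w j) \<le> 1/36"
  proof -
    have "sqnorm d (\<lambda>j. z j - w j) \<le> (\<Sum>j<d. 1 / (36 * real d))"
      unfolding sqnorm_def by (intro sum_mono coord_err) auto
    then show ?thesis using d by simp
  qed
  have w_small: "sqnorm d w \<le> 4"
  proof -
    have "(w j)^2 \<le> 2 * (z j)^2 + 2 * (z j - w j)^2" for j
      using zero_le_power2[of "2 * z j - w j"] by (simp add: power2_eq_square algebra_simps)
    then have "sqnorm d w \<le> (\<Sum>j<d. 2 * (z j)^2 + 2 * (z j - w j)^2)"
      unfolding sqnorm_def by (intro sum_mono) auto
    also have "\<dots> = 2 * sqnorm d z + 2 * sqnorm d (\<lambda>j. z j - w j)"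
      unfolding sqnorm_def by (simp add: sum.distrib sum_distrib_left)
    finally show ?thesis using z err by simp
  qed
  have x_sq: "(\<Sum>j<d. (real_of_int (x j))^2) \<le> 36 * real d"
  proof -
    have "(\<Sum>j<d. (real_of_int (x j))^2) = h^2 * sqnorm d w"
      unfolding sqnorm_def sum_distrib_left
      by (intro sum.cong) (use h in \<open>auto simp: w_def x_def h_def power_divide\<close>)
    also have "\<dots> \<le> h^2 * 4" using w_small by (intro mult_left_mono) auto
    finally show ?thesis using h2 by simp
  qed
  have x_range: "x j \<in> {-int (36*d)..int (36*d)}" if "j < d" for j
  proof -
    have "(real_of_int (x j))^2 \<le> (\<Sum>j<d. (real_of_int (x j))^2)"
      using that by (intro member_le_sum) auto
    then have "real_of_int ((x j)^2) \<le> real_of_int (int (36 * d))" using x_sq by simp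
    then have "(x j)^2 \<le> int (36 * d)" by (simp only: of_int_le_iff)
    then have "\<bar>x j\<bar> \<le> int (36 * d)" using int_abs_le_square[of "x j"] by linarith
    then show ?thesis unfolding atLeastAtMost_iff abs_le_iff by linarith
  qed
  have "x \<in> PiE {..<d} (\<lambda>_. {-int (36*d)..int (36*d)})"
    using x_range by (auto simp: x_def PiE_def Pi_def)
  then have "x \<in> net_index d" using x_sq unfolding net_index_def by blast
  then have "w \<in> net d" unfolding net_def w_def by blast
  with err show ?thesis by blast
qed

section \<open>From the net to the operator norm\<close>

(* If u^T B z <= K on net x net then u^T B z <= 2K on the product of unit balls: with S the
   supremum over the balls, the splitting of u^T B z around nearby net points gives
   S <= K + S/6 + S/3. *)
lemma bilin_bound_from_net:
  assumes n: "1 \<le> n" and k: "1 \<le> k"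
    and net_bound: "\<forall>u\<in>net n. \<forall>z\<in>net k. bilin n k B u z \<le> K"
    and u: "sqnorm n u \<le> 1" and z: "sqnorm k z \<le> 1"
  shows "bilin n k B u z \<le> 2 * K"
proof -
  define P where "P = {bilin n k B u z | u z. sqnorm n u \<le> 1 \<and> sqnorm k z \<le> 1}"
  have bounded: "bilin n k B u z \<le> (\<Sum>i<n. \<Sum>j<k. \<bar>B(i,j)\<bar>)"
    if "sqnorm n u \<le> 1" "sqnorm k z \<le> 1" for u z
  proof -
    have "bilin n k B u z \<le> (\<Sum>i<n. \<Sum>j<k. \<bar>u i\<bar> * \<bar>B(i,j)\<bar> * \<bar>z j\<bar>)"
      unfolding bilin_def by (intro sum_mono) (simp only: abs_mult[symmetric] abs_ge_self)
    also have "\<dots> \<le> (\<Sum>i<n. \<Sum>j<k. 1 * \<bar>B(i,j)\<bar> * 1)"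
      using that abs_coord_le_1 by (intro sum_mono mult_mono) auto
    finally show ?thesis by simp
  qed
  have bdd: "bdd_above P" unfolding P_def bdd_above_def using bounded by blast
  have "bilin n k B (\<lambda>_. 0) (\<lambda>_. 0) \<in> P"
    unfolding P_def by (intro CollectI exI[of _ "\<lambda>_. 0"] conjI) (auto simp: sqnorm_def)
  then have ne: "P \<noteq> {}" by blast
  define S where "S = Sup P"
  have upper: "bilin n k B u z \<le> S" if "sqnorm n u \<le> 1" "sqnorm k z \<le> 1" for u z
    unfolding S_def using that bdd unfolding P_def by (intro cSup_upper) auto
  have scaled: "bilin n k B v y \<le> a * b * S"
    if ab: "a > 0" "b > 0" and "sqnorm n v \<le> a^2" "sqnorm k y \<le> b^2" for v y a b
  proof -
    have "sqnorm n (\<lambda>i. (1/a) * v i) \<le> (1/a)^2 * a^2" "sqnorm k (\<lambda>j. (1/b) * y j) \<le> (1/b)^2 * b^2"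
      using that unfolding sqnorm_scale by (simp_all add: mult_left_mono)
    then have "sqnorm n (\<lambda>i. (1/a) * v i) \<le> 1" "sqnorm k (\<lambda>j. (1/b) * y j) \<le> 1"
      using ab by (simp_all add: power_divide)
    then have "(1/a) * (1/b) * bilin n k B v y \<le> S"
      using upper by (simp only: bilin_scale[symmetric])
    then show ?thesis using ab by (simp add: field_simps)
  qed
  have approx: "bilin n k B u z \<le> K + S/2" if hu: "sqnorm n u \<le> 1" and hz: "sqnorm k z \<le> 1" for u z
  proof -
    obtain u' where u': "u' \<in> net n" "sqnorm n (\<lambda>j. u j - u' j) \<le> 1/36"
      using net_approx[OF n hu] by blast
    obtain z' where z': "z' \<in> net k" "sqnorm k (\<lambda>j. z j - z' j) \<le> 1/36"
      using net_approx[OF k hz] by blast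
    have "bilin n k B u' z' \<le> K" using net_bound u' z' by blast
    moreover have "bilin n k B (\<lambda>i. u i - u' i) z \<le> (1/6) * 1 * S"
      by (rule scaled) (use u' hz in \<open>auto simp: power2_eq_square\<close>)
    moreover have "bilin n k B u' (\<lambda>j. z j - z' j) \<le> 2 * (1/6) * S"
      by (rule scaled) (use z' net_sqnorm_le[OF n u'(1)] in \<open>auto simp: power2_eq_square\<close>)
    ultimately show ?thesis using bilin_split[of n k B u z u' z'] by linarith
  qed
  have "S \<le> K + S/2" unfolding S_def
    by (rule cSup_least[OF ne]) (use approx in \<open>auto simp: P_def S_def\<close>)
  then show ?thesis using upper[OF u z] by simp
qed

(* An operator norm bound C gives ||Bz||_2^2 <= C^2 on the unit ball (test with u = Bz/||Bz||). *)
lemma image_sqnorm_bound: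
  assumes op_bound: "\<forall>u z. sqnorm n u \<le> 1 \<longrightarrow> sqnorm k z \<le> 1 \<longrightarrow> bilin n k B u z \<le> C"
    and z: "sqnorm k z \<le> 1"
  shows "sqnorm n (\<lambda>i. \<Sum>j<k. B(i,j) * z j) \<le> C^2"
proof -
  define y where "y = (\<lambda>i. \<Sum>j<k. B(i,j) * z j)"
  define Y where "Y = sqnorm n y"
  have Y0: "Y \<ge> 0" unfolding Y_def by (rule sqnorm_nonneg)
  show ?thesis
  proof (cases "Y = 0")
    case True
    then show ?thesis unfolding Y_def y_def by simp
  next
    case False
    then have Yp: "Y > 0" using Y0 by simp
    define u where "u = (\<lambda>i. (1 / sqrt Y) * y i)"
    have "sqnorm n u = 1" using Yp unfolding u_def sqnorm_scale Y_def by (simp add: power_divide)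
    then have "bilin n k B u z \<le> C" using op_bound z by simp
    moreover have "bilin n k B u z = sqrt Y"
      using Yp unfolding bilin_def u_def y_def Y_def sqnorm_def
      by (simp add: sum_distrib_left sum_divide_distrib[symmetric] power2_eq_square mult.assoc
          real_div_sqrt)
    ultimately have "(sqrt Y)^2 \<le> C^2" using Y0 by (intro power_mono) auto
    then show ?thesis using Y0 unfolding Y_def y_def by simp
  qed
qed

section \<open>The operator norm of a Gaussian matrix\<close>

definition net_bad_event :: "nat \<Rightarrow> nat \<Rightarrow> (nat \<times> nat \<Rightarrow> real) set" where
  "net_bad_event n k = (\<Union>uz\<in>net n \<times> net k.
     {B \<in> space (gauss_matrix n k). 85 * sqrt (real n) \<le> bilin n k B (fst uz) (snd uz)})"

(* Chernoff with t = sqrt n for each of at most exp(76 n) net pairs. *)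
lemma net_bad_event_prob:
  assumes n: "1 \<le> n" and k: "1 \<le> k" and kn: "k \<le> n"
  shows "net_bad_event n k \<in> sets (gauss_matrix n k)"
    and "measure (gauss_matrix n k) (net_bad_event n k) \<le> exp (- real n)"
proof -
  let ?M = "gauss_matrix n k"
  let ?E = "\<lambda>uz. {B \<in> space ?M. 85 * sqrt (real n) \<le> bilin n k B (fst uz) (snd uz)}"
  have [measurable]: "(\<lambda>B. bilin n k B u z) \<in> borel_measurable ?M" for u z by (rule bilin_measurable)
  have ev: "?E uz \<in> sets ?M" for uz by measurable
  have fin: "finite (net n \<times> net k)" using finite_net by auto
  show "net_bad_event n k \<in> sets ?M"
    unfolding net_bad_event_def using ev fin by (auto intro!: sets.finite_UN)
  have each: "measure ?M (?E uz) \<le> exp (- 77 * real n)" if "uz \<in> net n \<times> net k" for uz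
  proof -
    have "sqnorm n (fst uz) \<le> 4" "sqnorm k (snd uz) \<le> 4" using that net_sqnorm_le n k by auto
    then have "sqnorm n (fst uz) * sqnorm k (snd uz) \<le> 4 * 4"
      by (intro mult_mono) (auto simp: sqnorm_nonneg)
    then have "real n * (sqnorm n (fst uz) * sqnorm k (snd uz)) \<le> real n * 16"
      by (intro mult_left_mono) auto
    moreover have "sqrt (real n) * (85 * sqrt (real n)) = 85 * real n"
      by (simp add: mult.left_commute)
    ultimately have "real n * (sqnorm n (fst uz) * sqnorm k (snd uz)) / 2
               - sqrt (real n) * (85 * sqrt (real n)) \<le> - 77 * real n"
      by linarith
    then have "(sqrt (real n))^2 * sqnorm n (fst uz) * sqnorm k (snd uz) / 2
               - sqrt (real n) * (85 * sqrt (real n)) \<le> - 77 * real n"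
      by (simp add: mult.assoc)
    moreover have "measure ?M (?E uz)
        \<le> exp ((sqrt (real n))^2 * sqnorm n (fst uz) * sqnorm k (snd uz) / 2 - sqrt (real n) * (85 * sqrt (real n)))"
      by (rule bilin_chernoff) (use n in simp)
    ultimately show ?thesis by (meson exp_le_cancel_iff order_trans)
  qed
  have "measure ?M (net_bad_event n k) \<le> (\<Sum>uz\<in>net n \<times> net k. measure ?M (?E uz))"
    unfolding net_bad_event_def by (rule measure_UNION_le[OF fin ev])
  also have "\<dots> \<le> real (card (net n \<times> net k)) * exp (- 77 * real n)"
    using each by (rule sum_bounded_above)
  also have "\<dots> \<le> (exp (38 * real n) * exp (38 * real k)) * exp (- 77 * real n)"
    using card_net[of n] card_net[of k] by (intro mult_right_mono) (simp_all add: card_cartesian_product mult_mono)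
  also have "\<dots> \<le> exp (- real n)"
    using kn by (simp add: exp_add[symmetric])
  finally show "measure ?M (net_bad_event n k) \<le> exp (- real n)" .
qed

(* Outside the bad event, ||Bz||_2^2 <= (170 sqrt n)^2 = 28900 n for every unit vector z. *)
lemma image_sqnorm_outside_bad_event:
  assumes n: "1 \<le> n" and k: "1 \<le> k"
    and B: "B \<in> space (gauss_matrix n k) - net_bad_event n k" and z: "sqnorm k z \<le> 1"
  shows "sqnorm n (\<lambda>i. \<Sum>j<k. B(i,j) * z j) \<le> 28900 * real n"
proof -
  have "\<forall>u\<in>net n. \<forall>z\<in>net k. bilin n k B u z \<le> 85 * sqrt (real n)"
    using B unfolding net_bad_event_def by force
  then have "\<forall>u z. sqnorm n u \<le> 1 \<longrightarrow> sqnorm k z \<le> 1 \<longrightarrow> bilin n k B u z \<le> 2 * (85 * sqrt (real n))"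
    using bilin_bound_from_net[OF n k] by blast
  from image_sqnorm_bound[OF this z] show ?thesis by (simp add: power_mult_distrib)
qed

section \<open>Sparse l_p sums of a vector with bounded Euclidean norm\<close>

lemma powr_le_affine_square:
  assumes eta: "1 \<le> eta" and p: "0 < p" "p \<le> 1"
  shows "\<bar>y::real\<bar> powr p \<le> eta + y^2 / eta"
proof -
  have sq_term: "0 \<le> y^2 / eta" using eta by simp
  show ?thesis
  proof (cases "\<bar>y\<bar> \<le> 1")
    case True
    then have "\<bar>y\<bar> powr p \<le> 1" using p powr_mono2[of p "\<bar>y\<bar>" 1] by simp
    then show ?thesis using eta sq_term by linarith
  next
    case False
    then have a: "\<bar>y\<bar> powr p \<le> \<bar>y\<bar>" using p powr_mono[of p 1 "\<bar>y\<bar>"] by simp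
    show ?thesis
    proof (cases "\<bar>y\<bar> \<le> eta")
      case True then show ?thesis using a sq_term by linarith
    next
      case False
      then have "eta * \<bar>y\<bar> \<le> \<bar>y\<bar> * \<bar>y\<bar>" by (intro mult_right_mono) auto
      then have "\<bar>y\<bar> \<le> y^2 / eta" using eta by (simp add: field_simps power2_eq_square)
      then show ?thesis using a eta by linarith
    qed
  qed
qed

definition sparsity_const :: "real \<Rightarrow> real \<Rightarrow> real" where
  "sparsity_const C lam = lam / (8 * (8 * C / lam + 1))"

lemma sparsity_const_pos: "0 \<le> C \<Longrightarrow> 0 < lam \<Longrightarrow> 0 < sparsity_const C lam"
  unfolding sparsity_const_def by (simp add: add_nonneg_pos)

(* With eta = 8C/lam + 1:  sum_T |y_i|^p <= |T| eta + (sum_T y_i^2)/eta <= lam n/8 + lam n/8. *)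
lemma sparse_powr_sum_bound:
  assumes p: "0 < p" "p \<le> 1" and lam: "0 < lam" and C: "0 \<le> C" and n: "1 \<le> n"
    and y: "sqnorm n y \<le> C * real n" and T: "T \<subseteq> {..<n}"
    and card_T: "real (card T) \<le> sparsity_const C lam * real n"
  shows "(\<Sum>i\<in>T. \<bar>y i\<bar> powr p) < lam * real n / 2"
proof -
  define eta where "eta = 8 * C / lam + 1"
  have eta1: "1 \<le> eta" using lam C unfolding eta_def by simp
  have lam_eta: "lam * eta = 8 * C + lam" unfolding eta_def using lam by (simp add: field_simps)
  have "(\<Sum>i\<in>T. \<bar>y i\<bar> powr p) \<le> (\<Sum>i\<in>T. eta + (y i)^2 / eta)"
    by (intro sum_mono powr_le_affine_square[OF eta1 p])
  also have "\<dots> = real (card T) * eta + (\<Sum>i\<in>T. (y i)^2) / eta"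
    by (simp add: sum.distrib sum_divide_distrib)
  finally have split: "(\<Sum>i\<in>T. \<bar>y i\<bar> powr p) \<le> real (card T) * eta + (\<Sum>i\<in>T. (y i)^2) / eta" .
  have "real (card T) * eta \<le> sparsity_const C lam * real n * eta"
    using card_T eta1 by (intro mult_right_mono) auto
  also have "\<dots> = lam * real n / 8"
    using eta1 unfolding sparsity_const_def eta_def[symmetric] by simp
  finally have small_T: "real (card T) * eta \<le> lam * real n / 8" .
  have "(\<Sum>i\<in>T. (y i)^2) \<le> sqnorm n y"
    unfolding sqnorm_def using T by (intro sum_mono2) auto
  then have "(\<Sum>i\<in>T. (y i)^2) * 8 \<le> C * real n * 8" using y by simp
  also have "\<dots> \<le> (8 * C + lam) * real n" using lam by (simp add: algebra_simps)
  also have "\<dots> = lam * eta * real n" by (simp only: lam_eta)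
  finally have small_sq: "(\<Sum>i\<in>T. (y i)^2) / eta \<le> lam * real n / 8"
    using eta1 by (simp add: field_simps)
  have "0 < lam * real n" using lam n by simp
  then show ?thesis using split small_T small_sq by linarith
qed

section \<open>Measurability of the good event\<close>

definition lp_mass :: "(nat \<times> nat \<Rightarrow> real) \<Rightarrow> nat \<Rightarrow> nat set \<Rightarrow> real \<Rightarrow> (nat \<Rightarrow> real) \<Rightarrow> real" where
  "lp_mass B k T p z = (\<Sum>i\<in>T. \<bar>\<Sum>j<k. B(i,j) * z j\<bar> powr p)"

definition rat_vec :: "nat \<Rightarrow> rat list \<Rightarrow> nat \<Rightarrow> real" where
  "rat_vec k xs = (\<lambda>j. if j < k then real_of_rat (xs ! j) else 0)"

lemma lp_mass_cong: "(\<And>j. j < k \<Longrightarrow> z j = w j) \<Longrightarrow> lp_mass B k T p z = lp_mass B k T p w"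
  unfolding lp_mass_def by (intro sum.cong refl arg_cong2[where f="(powr)"] arg_cong[where f=abs]) auto

lemma lp_mass_homogeneous: "0 < p \<Longrightarrow> lp_mass B k T p (\<lambda>j. c * z j) = \<bar>c\<bar> powr p * lp_mass B k T p z"
proof -
  assume p: "0 < p"
  have "\<bar>\<Sum>j<k. B(i,j) * (c * z j)\<bar> powr p = \<bar>c\<bar> powr p * \<bar>\<Sum>j<k. B(i,j) * z j\<bar> powr p" for i
  proof -
    have "(\<Sum>j<k. B(i,j) * (c * z j)) = c * (\<Sum>j<k. B(i,j) * z j)"
      by (simp add: sum_distrib_left algebra_simps)
    then show ?thesis by (simp add: abs_mult powr_mult)
  qed
  then show ?thesis unfolding lp_mass_def by (simp add: sum_distrib_left)
qed

lemma lp_mass_continuous: "0 < p \<Longrightarrow> continuous_on UNIV (lp_mass B k T p)"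
  unfolding lp_mass_def
  by (intro continuous_intros continuous_on_powr')
     (auto intro: continuous_on_product_then_coordinatewise continuous_on_id)

lemma lp_mass_measurable:
  assumes "T \<subseteq> {..<n}"
  shows "(\<lambda>B. lp_mass B k T p z) \<in> borel_measurable (gauss_matrix n k)"
  unfolding lp_mass_def
proof (intro borel_measurable_sum)
  fix i assume "i \<in> T"
  then have "(\<lambda>B. \<Sum>j<k. B(i,j) * z j) \<in> borel_measurable (gauss_matrix n k)"
    using assms
    by (intro borel_measurable_sum borel_measurable_times gauss_matrix_entry_measurable
        borel_measurable_const) auto
  then show "(\<lambda>B. \<bar>\<Sum>j<k. B(i,j) * z j\<bar> powr p) \<in> borel_measurable (gauss_matrix n k)"
    by measurable
qed

(* The unit sphere of the first k coordinates, as a subset of nat => real (product topology). *)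
lemma unit_sphere_compact: "compact {z::nat\<Rightarrow>real. sqnorm k z = 1 \<and> (\<forall>j\<ge>k. z j = 0)}"
proof -
  define S where "S = (\<lambda>j::nat. if j < k then {-1..1::real} else {0})"
  have box: "compact (PiE UNIV S)"
    using compactin_PiE[of "\<lambda>_. euclidean::real topology" UNIV S]
    unfolding euclidean_product_topology S_def by auto
  have cl: "closed {z::nat\<Rightarrow>real. sqnorm k z = 1 \<and> (\<forall>j\<ge>k. z j = 0)}"
    unfolding sqnorm_def
    by (intro closed_Collect_conj closed_Collect_eq closed_Collect_all closed_Collect_imp)
       (auto intro!: continuous_intros intro: continuous_on_product_then_coordinatewise continuous_on_id)
  have "z \<in> PiE UNIV S" if "sqnorm k z = 1" "\<forall>j\<ge>k. z j = 0" for z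
    using that abs_coord_le_1[of _ k z] by (auto simp: S_def PiE_def Pi_def abs_le_iff)
  then have "{z::nat\<Rightarrow>real. sqnorm k z = 1 \<and> (\<forall>j\<ge>k. z j = 0)} \<subseteq> PiE UNIV S" by blast
  then show ?thesis using compact_Int_closed[OF box cl] by (simp add: Int_absorb1)
qed

(* A strict bound on the compact sphere holds with a uniform gap 1/(m+1), and by homogeneity
   extends to all vectors. *)
lemma sphere_bound_uniform_gap:
  assumes p: "0 < p" and k: "1 \<le> k" and H: "\<forall>z. sqnorm k z = 1 \<longrightarrow> lp_mass B k T p z < L"
  shows "\<exists>m::nat. \<forall>q. lp_mass B k T p q \<le> (L - inverse (real (Suc m))) * sqnorm k q powr (p/2)"
proof -
  define Z where "Z = {z::nat\<Rightarrow>real. sqnorm k z = 1 \<and> (\<forall>j\<ge>k. z j = 0)}"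
  have "sqnorm k (\<lambda>j. if j = 0 then 1 else 0::real) = (\<Sum>j<k. if j = 0 then 1 else 0)"
    unfolding sqnorm_def by (intro sum.cong) auto
  also have "\<dots> = 1" using k by simp
  finally have "sqnorm k (\<lambda>j. if j = 0 then 1 else 0::real) = 1" .
  then have "(\<lambda>j. if j = 0 then 1 else 0::real) \<in> Z" using k unfolding Z_def by auto
  then have ne: "Z \<noteq> {}" by blast
  have cont: "continuous_on Z (lp_mass B k T p)"
    by (rule continuous_on_subset[OF lp_mass_continuous[OF p]]) simp
  have cpt: "compact Z" unfolding Z_def by (rule unit_sphere_compact)
  obtain zs where zs: "zs \<in> Z" and zmax: "\<And>w. w \<in> Z \<Longrightarrow> lp_mass B k T p w \<le> lp_mass B k T p zs"
    using continuous_attains_sup[OF cpt ne cont] by blast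
  have "lp_mass B k T p zs < L" using H zs unfolding Z_def by auto
  then obtain m where m: "inverse (real (Suc m)) < L - lp_mass B k T p zs"
    using reals_Archimedean[of "L - lp_mass B k T p zs"] by auto
  have "lp_mass B k T p q \<le> (L - inverse (real (Suc m))) * sqnorm k q powr (p/2)" for q
  proof (cases "sqnorm k q = 0")
    case True
    then have "lp_mass B k T p q = lp_mass B k T p (\<lambda>_. 0)"
      unfolding sqnorm_def by (intro lp_mass_cong) (simp add: sum_nonneg_eq_0_iff)
    then show ?thesis using True p by (simp add: lp_mass_def)
  next
    case False
    define s where "s = sqnorm k q"
    then have s: "s > 0" using False sqnorm_nonneg[of k q] by simp
    define w where "w = (\<lambda>j. if j < k then q j / sqrt s else 0)"
    have "sqnorm k w = (\<Sum>j<k. (q j)^2 / s)"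
      unfolding sqnorm_def w_def by (intro sum.cong) (auto simp: power_divide s less_imp_le)
    also have "\<dots> = 1" using s unfolding s_def sqnorm_def by (simp add: sum_divide_distrib[symmetric])
    finally have wZ: "w \<in> Z" unfolding Z_def w_def by auto
    have "lp_mass B k T p q = lp_mass B k T p (\<lambda>j. sqrt s * w j)"
      by (intro lp_mass_cong) (use s in \<open>auto simp: w_def\<close>)
    also have "\<dots> = sqrt s powr p * lp_mass B k T p w" using lp_mass_homogeneous[OF p] s by simp
    also have "sqrt s powr p = s powr (p/2)"
      using s by (simp add: powr_half_sqrt[symmetric] powr_powr)
    also have "s powr (p/2) * lp_mass B k T p w \<le> s powr (p/2) * (L - inverse (real (Suc m)))"
      using zmax[OF wZ] m by (intro mult_left_mono) auto
    finally show ?thesis unfolding s_def by (simp add: mult.commute)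
  qed
  then show ?thesis by blast
qed

(* Conversely a bound tested on rational vectors extends to the sphere by density and
   continuity. *)
lemma sphere_bound_from_rationals:
  assumes p: "0 < p" and H: "\<forall>xs. lp_mass B k T p (rat_vec k xs) \<le> c * sqnorm k (rat_vec k xs) powr (p/2)"
    and z: "sqnorm k z = 1"
  shows "lp_mass B k T p z \<le> c"
proof -
  define e where "e = (\<lambda>N::nat. inverse (real (Suc N)))"
  have e0: "e \<longlonglongrightarrow> 0" unfolding e_def by (rule LIMSEQ_inverse_real_of_nat)
  define r where "r = (\<lambda>N j. SOME q::rat. z j - e N < of_rat q \<and> of_rat q < z j + e N)"
  have r: "z j - e N < of_rat (r N j) \<and> of_rat (r N j) < z j + e N" for N j
    unfolding r_def by (rule someI_ex) (rule of_rat_dense, simp add: e_def)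
  define xs where "xs = (\<lambda>N. map (r N) [0..<k])"
  have conv: "(\<lambda>N. rat_vec k (xs N) j) \<longlonglongrightarrow> z j" if "j < k" for j
  proof (rule tendsto_sandwich[of "\<lambda>N. z j - e N" _ _ "\<lambda>N. z j + e N"])
    show "\<forall>\<^sub>F N in sequentially. z j - e N \<le> rat_vec k (xs N) j"
         "\<forall>\<^sub>F N in sequentially. rat_vec k (xs N) j \<le> z j + e N"
      using r that by (auto simp: rat_vec_def xs_def intro!: always_eventually less_imp_le)
    show "(\<lambda>N. z j - e N) \<longlonglongrightarrow> z j" "(\<lambda>N. z j + e N) \<longlonglongrightarrow> z j"
      using tendsto_diff[OF tendsto_const e0] tendsto_add[OF tendsto_const e0] by simp_all
  qed
  have lhs: "(\<lambda>N. lp_mass B k T p (rat_vec k (xs N))) \<longlonglongrightarrow> lp_mass B k T p z"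
    unfolding lp_mass_def using p by (intro tendsto_intros conv) auto
  have "(\<lambda>N. sqnorm k (rat_vec k (xs N))) \<longlonglongrightarrow> 1"
    unfolding z[symmetric] sqnorm_def by (intro tendsto_intros conv) auto
  then have rhs: "(\<lambda>N. c * sqnorm k (rat_vec k (xs N)) powr (p/2)) \<longlonglongrightarrow> c * 1"
    using tendsto_powr[of "\<lambda>N. sqnorm k (rat_vec k (xs N))" 1 sequentially "\<lambda>_. p/2" "p/2"]
    by (intro tendsto_intros) auto
  show ?thesis
    using tendsto_le[OF trivial_limit_sequentially rhs lhs] H by simp
qed

(* The event "lp_mass < L on the whole sphere" is a countable union of countable intersections
   of measurable sets. *)
lemma sphere_bound_event_measurable:
  assumes p: "0 < p" and k: "1 \<le> k" and T: "T \<subseteq> {..<n}"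
  shows "{B \<in> space (gauss_matrix n k). \<forall>z. sqnorm k z = 1 \<longrightarrow> lp_mass B k T p z < L}
         \<in> sets (gauss_matrix n k)"
proof -
  have gap_pos: "L - inverse (real (Suc m)) < L" for m :: nat by simp
  have eq: "{B \<in> space (gauss_matrix n k). \<forall>z. sqnorm k z = 1 \<longrightarrow> lp_mass B k T p z < L}
    = {B \<in> space (gauss_matrix n k). \<exists>m::nat. \<forall>xs::rat list.
        lp_mass B k T p (rat_vec k xs) \<le> (L - inverse (real (Suc m))) * sqnorm k (rat_vec k xs) powr (p/2)}"
  proof (intro Collect_cong conj_cong refl iffI)
    fix B assume "\<forall>z. sqnorm k z = 1 \<longrightarrow> lp_mass B k T p z < L"
    then show "\<exists>m::nat. \<forall>xs::rat list.
        lp_mass B k T p (rat_vec k xs) \<le> (L - inverse (real (Suc m))) * sqnorm k (rat_vec k xs) powr (p/2)"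
      using sphere_bound_uniform_gap[OF p k] by blast
  next
    fix B assume "\<exists>m::nat. \<forall>xs::rat list.
        lp_mass B k T p (rat_vec k xs) \<le> (L - inverse (real (Suc m))) * sqnorm k (rat_vec k xs) powr (p/2)"
    then obtain m where "\<forall>xs::rat list.
        lp_mass B k T p (rat_vec k xs) \<le> (L - inverse (real (Suc m))) * sqnorm k (rat_vec k xs) powr (p/2)" ..
    then show "\<forall>z. sqnorm k z = 1 \<longrightarrow> lp_mass B k T p z < L"
      using sphere_bound_from_rationals[OF p] gap_pos[of m] by (meson le_less_trans)
  qed
  have [measurable]: "(\<lambda>B. lp_mass B k T p q) \<in> borel_measurable (gauss_matrix n k)" for q
    by (rule lp_mass_measurable[OF T])
  show ?thesis unfolding eq by measurable
qed

lemma sparse_lp_mass_event_prob: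
  assumes n: "1 \<le> n" and k: "1 \<le> k" and kn: "k \<le> n"
    and p: "0 < p" "p \<le> 1" and lam: "0 < lam"
  defines "rho \<equiv> sparsity_const 28900 lam"
  shows "1 - exp (- real n) \<le> measure (gauss_matrix n k)
        {B \<in> space (gauss_matrix n k). \<forall>z. sqnorm k z = 1 \<longrightarrow>
           (\<forall>T \<subseteq> {..<n}. real (card T) \<le> rho * real n \<longrightarrow> lp_mass B k T p z < lam * real n / 2)}"
    (is "_ \<le> measure ?M ?G")
proof -
  interpret prob_space ?M by (rule prob_space_gauss_matrix)
  note bad = net_bad_event_prob[OF n k kn]
  define TT where "TT = {T. T \<subseteq> {..<n} \<and> real (card T) \<le> rho * real n}"
  have "finite TT" unfolding TT_def by (rule finite_subset[of _ "Pow {..<n}"]) auto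
  moreover have "{} \<in> TT"
    unfolding TT_def rho_def using sparsity_const_pos[of 28900 lam] lam by simp
  ultimately have "space ?M \<inter> (\<Inter>T\<in>TT. {B \<in> space ?M. \<forall>z. sqnorm k z = 1 \<longrightarrow> lp_mass B k T p z < lam * real n / 2})
      \<in> sets ?M"
    by (intro sets.Int sets.top sets.finite_INT sphere_bound_event_measurable[OF p(1) k])
       (auto simp: TT_def)
  moreover have "?G = space ?M \<inter> (\<Inter>T\<in>TT. {B \<in> space ?M. \<forall>z. sqnorm k z = 1 \<longrightarrow> lp_mass B k T p z < lam * real n / 2})"
    unfolding TT_def by auto
  ultimately have G_meas: "?G \<in> sets ?M" by simp
  have "B \<in> ?G" if B: "B \<in> space ?M - net_bad_event n k" for B
  proof -
    have "lp_mass B k T p z < lam * real n / 2"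
      if z: "sqnorm k z = 1" and T: "T \<subseteq> {..<n}" and card_T: "real (card T) \<le> rho * real n" for z T
    proof -
      have "sqnorm n (\<lambda>i. \<Sum>j<k. B(i,j) * z j) \<le> 28900 * real n"
        using image_sqnorm_outside_bad_event[OF n k B] z by simp
      from sparse_powr_sum_bound[OF p lam _ n this T card_T[unfolded rho_def]]
      show ?thesis unfolding lp_mass_def by linarith
    qed
    then show ?thesis using B by auto
  qed
  then have "space ?M - net_bad_event n k \<subseteq> ?G" by blast
  then have "measure ?M (space ?M - net_bad_event n k) \<le> measure ?M ?G"
    using G_meas by (intro finite_measure_mono) auto
  then show ?thesis using prob_compl[OF bad(1)] bad(2) by simp
qed

lemma column_count_bounds:
  assumes "\<alpha> < 1" "1 \<le> n"
  shows "1 \<le> n - nat \<lfloor>\<alpha> * real n\<rfloor>"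
proof -
  have "\<alpha> * real n < real n" using assms by simp
  then have "\<lfloor>\<alpha> * real n\<rfloor> < int n" by linarith
  then show ?thesis using assms(2) by linarith
qed

theorem lemma6:
  fixes \<alpha> p lam :: real
  assumes "0 < \<alpha>" "\<alpha> < 1" "0 < p" "p \<le> 1" "0 < lam"
  shows "\<exists>\<rho> > 0. \<exists>c > 0. \<exists>N. \<forall>n \<ge> N.
    (let m = nat \<lfloor>\<alpha> * real n\<rfloor> in
      measure (gauss_matrix n (n - m))
        {B \<in> space (gauss_matrix n (n - m)).
           \<forall>z :: nat \<Rightarrow> real. (\<Sum>j<n - m. (z j)\<^sup>2) = 1 \<longrightarrow>
             (\<forall>T \<subseteq> {..<n}. real (card T) \<le> \<rho> * real n \<longrightarrow>
                (\<Sum>i\<in>T. \<bar>\<Sum>j<n - m. B (i, j) * z j\<bar> powr p) < lam * real n / 2)}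
      \<ge> 1 - exp (- c * real n))"
proof -
  define rho where "rho = sparsity_const 28900 lam"
  have rho: "0 < rho" unfolding rho_def using assms(5) by (simp add: sparsity_const_pos)
  show ?thesis
  proof (rule exI[of _ rho], intro conjI exI[of _ "1::real"] exI[of _ "1::nat"] allI impI rho)
    fix n :: nat assume n: "1 \<le> n"
    have "1 \<le> n - nat \<lfloor>\<alpha> * real n\<rfloor>" using column_count_bounds[OF assms(2) n] .
    note bound = sparse_lp_mass_event_prob[OF n this diff_le_self assms(3-5), folded rho_def]
    show "let m = nat \<lfloor>\<alpha> * real n\<rfloor> in
        measure (gauss_matrix n (n - m))
          {B \<in> space (gauss_matrix n (n - m)).
             \<forall>z :: nat \<Rightarrow> real. (\<Sum>j<n - m. (z j)\<^sup>2) = 1 \<longrightarrow>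
               (\<forall>T \<subseteq> {..<n}. real (card T) \<le> rho * real n \<longrightarrow>
                  (\<Sum>i\<in>T. \<bar>\<Sum>j<n - m. B (i, j) * z j\<bar> powr p) < lam * real n / 2)}
        \<ge> 1 - exp (- 1 * real n)"
      unfolding Let_def mult_minus1 using bound unfolding sqnorm_def lp_mass_def .
  qed simp
qed

end
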